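(* Fix $x,y>0$. As a function of the pair $(r,s)$, the extended mean value $E(r,s;x,y)$ is Schur-concave on $[0,\infty)\times[0,\infty)$ and Schur-convex on $(-\infty,0]\times(-\infty,0]$.
   Context: For $x,y>0$ and $r,s\in\mathbb{R}$ the extended mean values are defined by $E(r,s;x,y)=\bigl(\frac{r}{s}\cdot\frac{y^s-x^s}{y^r-x^r}\bigr)^{1/(s-r)}$ if $rs(r-s)(x-y)\neq0$; $E(r,0;x,y)=E(0,r;x,y)=\bigl(\frac1r\cdot\frac{y^r-x^r}{\ln y-\ln x}\bigr)^{1/r}$ if $r(x-y)\neq0$; $E(r,r;x,y)=e^{-1/r}\bigl(\frac{x^{x^r}}{y^{y^r}}\bigr)^{1/(x^r-y^r)}$ if $r(x-y)\neq0$; $E(0,0;x,y)=\sqrt{xy}$ if $x\neq y$; $E(r,s;x,x)=x$. A function $f$ of two real variables defined on $I\times I$ ($I$ an interval) is Schur-convex if $f(r,s)\le f(r',s')$ whenever $(r,s),(r',s')\in I^2$ satisfy $(r,s)\prec(r',s')$, meaning $r+s=r'+s'$ and $\max\{r,s\}\le\max\{r',s'\}$; $f$ is Schur-concave if $-f$ is Schur-convex. *)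

theory Defs
  imports "HOL-Analysis.Analysis"
begin

definition ext_mean :: "real \<Rightarrow> real \<Rightarrow> real \<Rightarrow> real \<Rightarrow> real" where
  "ext_mean r s x y =
    (if x = y then x
     else if r \<noteq> 0 \<and> s \<noteq> 0 \<and> r \<noteq> s then
       ((r / s) * ((y powr s - x powr s) / (y powr r - x powr r))) powr (1 / (s - r))
     else if r \<noteq> 0 \<and> s = 0 then
       ((1 / r) * ((y powr r - x powr r) / (ln y - ln x))) powr (1 / r)
     else if r = 0 \<and> s \<noteq> 0 then
       ((1 / s) * ((y powr s - x powr s) / (ln y - ln x))) powr (1 / s)
     else if r = s \<and> r \<noteq> 0 then
       exp (- 1 / r) * ((x powr (x powr r) / y powr (y powr r)) powr (1 / (x powr r - y powr r)))
     else sqrt (x * y))"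

definition majorized2 :: "real \<times> real \<Rightarrow> real \<times> real \<Rightarrow> bool" where
  "majorized2 p q \<longleftrightarrow> fst p + snd p = fst q + snd q \<and> max (fst p) (snd p) \<le> max (fst q) (snd q)"

definition schur_convex_on :: "real set \<Rightarrow> (real \<Rightarrow> real \<Rightarrow> real) \<Rightarrow> bool" where
  "schur_convex_on I f \<longleftrightarrow>
     (\<forall>r\<in>I. \<forall>s\<in>I. \<forall>r'\<in>I. \<forall>s'\<in>I. majorized2 (r, s) (r', s') \<longrightarrow> f r s \<le> f r' s')"

definition schur_concave_on :: "real set \<Rightarrow> (real \<Rightarrow> real \<Rightarrow> real) \<Rightarrow> bool" where
  "schur_concave_on I f \<longleftrightarrow> schur_convex_on I (\<lambda>r s. - f r s)"

end

theory Submission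
  imports Defs
begin

(* Write x = exp (c - h) and y = exp (c + h) with h \<noteq> 0.  In each of the five
   cases of its definition the extended mean takes the form
       E(r,s;x,y) = exp (c + h * D (r*h) (s*h)),
   where D is the divided difference of the even function psi z = ln (sinh z / z)
   (D u v = (psi v - psi u) / (v - u), and psi' u on the diagonal).  Since D is odd we may
   take h > 0.  As exp is increasing and majorization of pairs is invariant under scaling,
   the theorem reduces to: D is Schur-concave on [0,\<infinity>)^2, and hence, being odd,
   Schur-convex on (-\<infinity>,0]^2.
   Schur-concavity holds for the divided difference of every f with f'' nonincreasing on
   (0,\<infinity>): for a fixed midpoint m, G t = f (m + t) - f (m - t) is concave with G 0 = 0,
   so the symmetric chord slope G t / (2 t) decreases in t.  For f = psi the condition
   psi''' \<le> 0 amounts to Lazarevi\'c's inequality z^3 cosh z \<le> sinh^3 z. *)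

section \<open>The function psi z = ln (sinh z / z)\<close>

definition sinhc :: "real \<Rightarrow> real" where
  "sinhc z = (if z = 0 then 1 else sinh z / z)"

definition psi :: "real \<Rightarrow> real" where
  "psi z = ln (sinhc z)"

text \<open>The derivatives of psi; psi1 is defined on all of the reals (psi' 0 = 0 by symmetry),
  psi2 is only used on the positive half-line.\<close>

definition psi1 :: "real \<Rightarrow> real" where
  "psi1 z = (if z = 0 then 0 else cosh z / sinh z - 1 / z)"

definition psi2 :: "real \<Rightarrow> real" where
  "psi2 z = 1 / z^2 - 1 / (sinh z)^2"

lemma sinhc_pos: "sinhc z > 0"
  by (cases "z > 0") (auto simp: sinhc_def divide_pos_pos divide_neg_neg)

lemma psi_even: "psi (- z) = psi z"
  by (simp add: psi_def sinhc_def)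

lemma psi1_odd: "psi1 (- z) = - psi1 z"
  by (simp add: psi1_def)

lemma psi_nonzero: "z \<noteq> 0 \<Longrightarrow> psi z = ln (sinh z / z)"
  by (simp add: psi_def sinhc_def)

lemma psi_has_derivative:
  assumes "z > 0" shows "(psi has_real_derivative psi1 z) (at z)"
proof -
  have "((\<lambda>t. ln (sinh t / t)) has_real_derivative psi1 z) (at z)"
    using assms
    by (auto intro!: derivative_eq_intros simp: psi1_def) (auto simp: field_simps power2_eq_square)
  then show ?thesis
    by (rule has_field_derivative_transform_within_open[where S = "{0<..}"])
      (use assms in \<open>auto simp: psi_nonzero\<close>)
qed

lemma psi1_has_derivative:
  assumes "z > 0" shows "(psi1 has_real_derivative psi2 z) (at z)"
proof -
  have "((\<lambda>t. cosh t / sinh t - 1 / t) has_real_derivative psi2 z) (at z)"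
    using assms cosh_square_eq[of z]
    by (auto intro!: derivative_eq_intros simp: psi2_def)
      (auto simp: field_simps power2_eq_square)
  then show ?thesis
    by (rule has_field_derivative_transform_within_open[where S = "{0<..}"])
      (use assms in \<open>auto simp: psi1_def\<close>)
qed

lemma psi2_has_derivative:
  assumes "z > 0"
  shows "(psi2 has_real_derivative - 2 / z^3 + 2 * cosh z / (sinh z)^3) (at z)"
  unfolding psi2_def using assms
  by (auto intro!: derivative_eq_intros)
    (auto simp: field_simps power2_eq_square power3_eq_cube, algebra)

text \<open>sinh z / z \<rightarrow> 1 as z \<rightarrow> 0, so psi is continuous at the origin as well.\<close>

lemma psi_continuous_at_0: "isCont psi 0"
proof -
  have "(sinh has_real_derivative 1) (at 0)"
    using has_field_derivative_sinh[of "\<lambda>x. x" 1 0] by (auto intro: DERIV_ident)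
  then have "((\<lambda>t::real. (sinh t - sinh 0) / (t - 0)) \<longlongrightarrow> 1) (at 0)"
    by (simp add: has_field_derivative_iff)
  then have "(sinhc \<longlongrightarrow> 1) (at 0)"
    by (rule tendsto_cong[THEN iffD1, rotated]) (auto simp: sinhc_def eventually_at_filter)
  then have "(psi \<longlongrightarrow> ln 1) (at 0)"
    unfolding psi_def by (intro tendsto_ln) auto
  then show ?thesis by (simp add: isCont_def psi_def sinhc_def)
qed

lemma psi_continuous_on_nonneg: "continuous_on {0..} psi"
proof (intro continuous_at_imp_continuous_on ballI)
  fix z :: real assume "z \<in> {0..}"
  then consider "z = 0" | "z > 0" by fastforce
  then show "isCont psi z"
    by cases (use psi_continuous_at_0 psi_has_derivative DERIV_isCont in auto)
qed

section \<open>Lazarevi\'c's inequality and the sign of psi'''\<close>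

text \<open>An elementary inequality, obtained by differentiating three times; it is the
  derivative estimate behind Lazarevi\'c's inequality.\<close>

lemma hyperbolic_cubic_ineq:
  fixes t :: real assumes "t \<ge> 0"
  shows "2 * t + t * cosh t - 3 * sinh t \<ge> 0"
proof -
  have third: "t * cosh t - sinh t \<ge> 0" if "t \<ge> 0" for t :: real
  proof -
    have "((\<lambda>t. t * cosh t - sinh t) has_real_derivative x * sinh x) (at x)" for x :: real
      by (auto intro!: derivative_eq_intros)
    then show ?thesis
      using DERIV_nonneg_imp_nondecreasing[OF that, of "\<lambda>t. t * cosh t - sinh t"] by force
  qed
  have second: "2 - 2 * cosh t + t * sinh t \<ge> 0" if "t \<ge> 0" for t :: real
  proof -
    have "((\<lambda>t. 2 - 2 * cosh t + t * sinh t) has_real_derivative x * cosh x - sinh x) (at x)"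
      for x :: real
      by (auto intro!: derivative_eq_intros)
    then show ?thesis
      using DERIV_nonneg_imp_nondecreasing[OF that, of "\<lambda>t. 2 - 2 * cosh t + t * sinh t"] third
      by force
  qed
  have "((\<lambda>t. 2 * t + t * cosh t - 3 * sinh t) has_real_derivative 2 - 2 * cosh x + x * sinh x)
      (at x)" for x :: real
    by (auto intro!: derivative_eq_intros)
  then show ?thesis
    using DERIV_nonneg_imp_nondecreasing[OF assms, of "\<lambda>t. 2 * t + t * cosh t - 3 * sinh t"] second
    by force
qed

text \<open>The derivative of 3 psi - ln cosh is nonnegative on (0,\<infinity>).\<close>

lemma lazarevic_derivative_nonneg:
  fixes z :: real assumes z: "z > 0"
  shows "3 * psi1 z - sinh z / cosh z \<ge> 0"
proof -
  have "2 * (2*z) + (2*z) * cosh (2*z) - 3 * sinh (2*z)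
      = 2 * (3 * z * cosh z ^ 2 - 3 * sinh z * cosh z - z * sinh z ^ 2)"
    unfolding sinh_double cosh_double by (simp add: algebra_simps cosh_square_eq)
  with hyperbolic_cubic_ineq[of "2*z"] z
  have num: "0 \<le> 3 * z * cosh z ^ 2 - 3 * sinh z * cosh z - z * sinh z ^ 2" by simp
  have "sinh z > 0" using z by simp
  then have "3 * psi1 z - sinh z / cosh z
      = (3 * z * cosh z ^ 2 - 3 * sinh z * cosh z - z * sinh z ^ 2) / (z * sinh z * cosh z)"
    using z by (simp add: psi1_def field_simps power2_eq_square)
  also have "\<dots> \<ge> 0" using num z \<open>sinh z > 0\<close> by (intro divide_nonneg_pos) auto
  finally show ?thesis .
qed

lemma lazarevic_ineq:
  fixes z :: real assumes z: "z > 0"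
  shows "z^3 * cosh z \<le> sinh z ^ 3"
proof -
  have "(\<lambda>t. 3 * psi t - ln (cosh t)) 0 \<le> (\<lambda>t. 3 * psi t - ln (cosh t)) z"
  proof (rule DERIV_nonneg_imp_increasing_open[where f = "\<lambda>t. 3 * psi t - ln (cosh t)"])
    show "continuous_on {0..z} (\<lambda>t. 3 * psi t - ln (cosh t))"
      using continuous_on_subset[OF psi_continuous_on_nonneg, of "{0..z}"]
      by (auto intro!: continuous_intros)
    fix t :: real assume "0 < t" "t < z"
    then show "\<exists>l. ((\<lambda>t. 3 * psi t - ln (cosh t)) has_real_derivative l) (at t) \<and> l \<ge> 0"
      using lazarevic_derivative_nonneg
      by (force intro!: derivative_eq_intros psi_has_derivative)
  qed (use z in auto)
  then have "ln (cosh z) \<le> 3 * ln (sinhc z)" by (simp add: psi_def sinhc_def)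
  also have "\<dots> = ln (sinhc z ^ 3)" using sinhc_pos by (simp add: ln_realpow)
  finally have "cosh z \<le> (sinh z / z) ^ 3" using sinhc_pos z by (simp add: sinhc_def)
  then show ?thesis using z by (simp add: field_simps power_divide)
qed

lemma psi2_antitone:
  assumes "0 < u" "u \<le> v" shows "psi2 v \<le> psi2 u"
proof (rule DERIV_nonpos_imp_nonincreasing[OF assms(2)])
  fix t assume "u \<le> t" "t \<le> v"
  with assms have "t > 0" by simp
  then show "\<exists>l. (psi2 has_real_derivative l) (at t) \<and> l \<le> 0"
    using psi2_has_derivative lazarevic_ineq[of t] by (force simp: field_simps)
qed

section \<open>Schur-concavity of divided differences\<close>

definition divdiff :: "(real \<Rightarrow> real) \<Rightarrow> (real \<Rightarrow> real) \<Rightarrow> real \<Rightarrow> real \<Rightarrow> real" where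
  "divdiff f f' u v = (if u = v then f' u else (f v - f u) / (v - u))"

lemma divdiff_sym: "divdiff f f' u v = divdiff f f' v u"
  by (simp add: divdiff_def divide_simps) (simp add: field_simps)

lemma divdiff_odd:
  assumes "\<And>z. f (- z) = f z" and "\<And>z. f' (- z) = - f' z"
  shows "divdiff f f' (- u) (- v) = - divdiff f f' u v"
  using assms by (auto simp: divdiff_def divide_simps) (simp add: field_simps)

lemma derivative_symmetric_compositions:
  fixes g g' :: "real \<Rightarrow> real"
  assumes g': "\<And>x. m - r < x \<Longrightarrow> x < m + r \<Longrightarrow> (g has_real_derivative g' x) (at x)"
    and t: "0 \<le> t" "t < r"
  shows "((\<lambda>t. g (m + t)) has_real_derivative g' (m + t)) (at t)"
    and "((\<lambda>t. g (m - t)) has_real_derivative - g' (m - t)) (at t)"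
proof -
  have "((\<lambda>t. g (m + t)) has_real_derivative g' (m + t) * 1) (at t)"
    by (rule DERIV_chain'[where g = g]) (use t in \<open>auto intro!: derivative_eq_intros g'\<close>)
  then show "((\<lambda>t. g (m + t)) has_real_derivative g' (m + t)) (at t)" by simp
  have "((\<lambda>t. g (m - t)) has_real_derivative g' (m - t) * (- 1)) (at t)"
    by (rule DERIV_chain'[where g = g]) (use t in \<open>auto intro!: derivative_eq_intros g'\<close>)
  then show "((\<lambda>t. g (m - t)) has_real_derivative - g' (m - t)) (at t)" by simp
qed

text \<open>Chords from the origin of a concave function G with G 0 = 0 (concavity expressed by a
  nonincreasing derivative G1): they lie below the tangent at 0, and their slopes G t / t
  decrease.  Both follow from the mean value theorem, G t = t G1 \<xi> with 0 < \<xi> < t.\<close>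

lemma concave_chords_from_origin:
  fixes G G1 :: "real \<Rightarrow> real"
  assumes "0 < b" and cont: "continuous_on {0..b} G" and G0: "G 0 = 0"
    and deriv: "\<And>t. 0 \<le> t \<Longrightarrow> t < b \<Longrightarrow> (G has_real_derivative G1 t) (at t)"
    and anti: "\<And>s t. 0 \<le> s \<Longrightarrow> s \<le> t \<Longrightarrow> t < b \<Longrightarrow> G1 t \<le> G1 s"
  shows "G b \<le> b * G1 0"
    and "0 < d \<Longrightarrow> d \<le> b \<Longrightarrow> G b / b \<le> G d / d"
proof -
  have chord: "\<exists>\<xi>. 0 < \<xi> \<and> \<xi> < t \<and> G t = t * G1 \<xi>" if "0 < t" "t \<le> b" for t
  proof -
    have "continuous_on {0..t} G" using cont that by (auto intro: continuous_on_subset)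
    moreover have "G differentiable (at \<xi>)" if "0 < \<xi>" "\<xi> < t" for \<xi>
      using deriv[of \<xi>] that \<open>t \<le> b\<close> by (auto simp: real_differentiable_def)
    ultimately obtain l \<xi> where "0 < \<xi>" "\<xi> < t" "(G has_real_derivative l) (at \<xi>)"
      and "G t - G 0 = (t - 0) * l"
      using MVT[OF \<open>0 < t\<close>] by blast
    moreover have "(G has_real_derivative G1 \<xi>) (at \<xi>)"
      using deriv \<open>0 < \<xi>\<close> \<open>\<xi> < t\<close> \<open>t \<le> b\<close> by simp
    ultimately show ?thesis using G0 DERIV_unique by fastforce
  qed
  obtain \<xi> where "0 < \<xi>" "\<xi> < b" "G b = b * G1 \<xi>" using chord[of b] \<open>0 < b\<close> by auto
  then show "G b \<le> b * G1 0" using anti[of 0 \<xi>] \<open>0 < b\<close> by (simp add: mult_left_mono)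
  assume "0 < d" "d \<le> b"
  show "G b / b \<le> G d / d"
  proof (rule DERIV_nonpos_imp_decreasing_open[OF \<open>d \<le> b\<close>])
    show "continuous_on {d..b} (\<lambda>t. G t / t)"
      using continuous_on_subset[OF cont, of "{d..b}"] \<open>0 < d\<close> by (auto intro!: continuous_intros)
    fix t assume t: "d < t" "t < b"
    then obtain \<xi> where "0 < \<xi>" "\<xi> < t" "G t = t * G1 \<xi>" using chord[of t] \<open>0 < d\<close> by auto
    then have "t * G1 t - G t \<le> 0" using anti[of \<xi> t] t by (simp add: mult_left_mono)
    moreover have "((\<lambda>t. G t / t) has_real_derivative (t * G1 t - G t) / t\<^sup>2) (at t)"
      using t \<open>0 < d\<close> by (auto intro!: derivative_eq_intros deriv simp: power2_eq_square field_simps)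
    ultimately show "\<exists>l. ((\<lambda>t. G t / t) has_real_derivative l) (at t) \<and> l \<le> 0"
      using divide_nonpos_nonneg[of "t * G1 t - G t" "t\<^sup>2"] by auto
  qed
qed

text \<open>The key estimate: if f'' is nonincreasing around m, the slope of the chord over the
  symmetric interval [m - d, m + d] decreases as d grows.  Indeed G t = f (m + t) - f (m - t)
  vanishes at 0 and its derivative f' (m + t) + f' (m - t) is nonincreasing, and the slope in
  question is G d / (2 d), or G' 0 / 2 = f' m for d = 0.\<close>

lemma divdiff_symmetric_antimono:
  fixes f f' f'' :: "real \<Rightarrow> real"
  assumes dd: "0 \<le> d" "d \<le> d'"
    and cont: "continuous_on {m - d'..m + d'} f"
    and f': "\<And>x. m - d' < x \<Longrightarrow> x < m + d' \<Longrightarrow> (f has_real_derivative f' x) (at x)"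
    and f'': "\<And>x. m - d' < x \<Longrightarrow> x < m + d' \<Longrightarrow> (f' has_real_derivative f'' x) (at x)"
    and anti: "\<And>x y. m - d' < x \<Longrightarrow> x \<le> y \<Longrightarrow> y < m + d' \<Longrightarrow> f'' y \<le> f'' x"
  shows "divdiff f f' (m - d') (m + d') \<le> divdiff f f' (m - d) (m + d)"
proof (cases "d = d'")
  case False
  with dd have "0 < d'" "d < d'" by simp_all
  define G where "G t = f (m + t) - f (m - t)" for t
  define G1 where "G1 t = f' (m + t) + f' (m - t)" for t
  have G_cont: "continuous_on {0..d'} G"
    unfolding G_def by (intro continuous_intros continuous_on_compose2[OF cont]) auto
  have G_deriv: "(G has_real_derivative G1 t) (at t)" if "0 \<le> t" "t < d'" for t
    using DERIV_diff[OF derivative_symmetric_compositions[of m d' f f', OF f' that]]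
    unfolding G_def G1_def by simp
  have G1_antitone: "G1 t \<le> G1 s" if "0 \<le> s" "s \<le> t" "t < d'" for s t
  proof (rule DERIV_nonpos_imp_nonincreasing[OF that(2)])
    fix x assume "s \<le> x" "x \<le> t"
    with that have "0 \<le> x" "x < d'" and "f'' (m + x) \<le> f'' (m - x)" by (auto intro: anti)
    moreover have "(G1 has_real_derivative f'' (m + x) + - f'' (m - x)) (at x)"
      using DERIV_add[OF derivative_symmetric_compositions[of m d' f' f'', OF f'' \<open>0 \<le> x\<close> \<open>x < d'\<close>]]
      unfolding G1_def .
    ultimately show "\<exists>l. (G1 has_real_derivative l) (at x) \<and> l \<le> 0" by force
  qed
  have "G 0 = 0" by (simp add: G_def)
  note chords = concave_chords_from_origin[OF \<open>0 < d'\<close> G_cont \<open>G 0 = 0\<close> G_deriv G1_antitone]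
  have slope: "divdiff f f' (m - t) (m + t) = G t / (2 * t)" if "t > 0" for t
    using that by (simp add: divdiff_def G_def)
  show ?thesis
  proof (cases "d = 0")
    case True
    have "G d' / (2 * d') \<le> G1 0 / 2"
      using chords(1) \<open>0 < d'\<close> by (simp add: field_simps)
    then show ?thesis
      using True \<open>0 < d'\<close> slope[of d'] by (simp add: divdiff_def G1_def)
  next
    case False
    with dd have "0 < d" by simp
    then have "G d' / d' \<le> G d / d" using chords(2) \<open>d < d'\<close> by simp
    then show ?thesis using \<open>0 < d\<close> \<open>d < d'\<close> by (simp add: slope divide_simps mult.commute)
  qed
qed simp

text \<open>Writing (u,v) as (m - d, m + d), majorization with a common sum m means a larger
  half-width d; hence the divided difference of a function with nonincreasing second
  derivative on (0,\<infinity>) is Schur-concave on the nonnegative quadrant.\<close>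

lemma divdiff_schur_concave:
  fixes f f' f'' :: "real \<Rightarrow> real"
  assumes cont: "continuous_on {0..} f"
    and f': "\<And>x. 0 < x \<Longrightarrow> (f has_real_derivative f' x) (at x)"
    and f'': "\<And>x. 0 < x \<Longrightarrow> (f' has_real_derivative f'' x) (at x)"
    and anti: "\<And>x y. 0 < x \<Longrightarrow> x \<le> y \<Longrightarrow> f'' y \<le> f'' x"
  shows "schur_concave_on {0..} (divdiff f f')"
  unfolding schur_concave_on_def schur_convex_on_def
proof (intro ballI impI)
  fix u v u' v' :: real
  assume nonneg: "u \<in> {0..}" "v \<in> {0..}" "u' \<in> {0..}" "v' \<in> {0..}"
    and "majorized2 (u, v) (u', v')"
  then have sum: "u + v = u' + v'" and wider: "max u v \<le> max u' v'"
    by (auto simp: majorized2_def)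
  define m where "m = (u + v) / 2"
  define d where "d = \<bar>u - v\<bar> / 2"
  define d' where "d' = \<bar>u' - v'\<bar> / 2"
  have "m - d = min u v" "m + d = max u v"
    unfolding m_def d_def by (auto simp: abs_if min_def max_def field_simps)
  then have uv: "divdiff f f' u v = divdiff f f' (m - d) (m + d)"
    by (cases "u \<le> v") (auto simp: divdiff_sym min_def max_def)
  have "m - d' = min u' v'" "m + d' = max u' v'"
    unfolding m_def d'_def using sum by (auto simp: abs_if min_def max_def field_simps)
  then have uv': "divdiff f f' u' v' = divdiff f f' (m - d') (m + d')"
    by (cases "u' \<le> v'") (auto simp: divdiff_sym min_def max_def)
  have "0 \<le> d" "d \<le> d'" "d' \<le> m"
    using nonneg sum wider unfolding m_def d_def d'_def by (auto simp: max_def abs_if)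
  then have "divdiff f f' (m - d') (m + d') \<le> divdiff f f' (m - d) (m + d)"
    by (intro divdiff_symmetric_antimono[where f'' = f''] continuous_on_subset[OF cont] f' f'' anti)
      auto
  then show "- divdiff f f' u v \<le> - divdiff f f' u' v'" unfolding uv uv' by simp
qed

section \<open>Majorization of pairs\<close>

lemma majorized2_iff_spread:
  "majorized2 (r, s) (r', s') \<longleftrightarrow> r + s = r' + s' \<and> \<bar>r - s\<bar> \<le> \<bar>r' - s'\<bar>"
  by (auto simp: majorized2_def max_def abs_if)

lemma majorized2_scale:
  "majorized2 (r, s) (r', s') \<Longrightarrow> majorized2 (r * k, s * k) (r' * k, s' * k)"
  unfolding majorized2_iff_spread
  by (auto simp: left_diff_distrib[symmetric] abs_mult distrib_right[symmetric] mult_right_mono)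

lemma schur_convex_on_rescale_mono:
  assumes g: "schur_convex_on J g" and "k > 0" and IJ: "\<And>t. t \<in> I \<Longrightarrow> t * k \<in> J"
    and "mono \<phi>"
  shows "schur_convex_on I (\<lambda>r s. \<phi> (g (r * k) (s * k)))"
  unfolding schur_convex_on_def
proof (intro ballI impI)
  fix r s r' s' assume "r \<in> I" "s \<in> I" "r' \<in> I" "s' \<in> I" "majorized2 (r, s) (r', s')"
  then have "g (r * k) (s * k) \<le> g (r' * k) (s' * k)"
    using g IJ majorized2_scale by (simp add: schur_convex_on_def)
  then show "\<phi> (g (r * k) (s * k)) \<le> \<phi> (g (r' * k) (s' * k))" by (rule monoD[OF \<open>mono \<phi>\<close>])
qed

lemma schur_convex_on_nonpos_if_odd:
  fixes g :: "real \<Rightarrow> real \<Rightarrow> real"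
  assumes conc: "schur_concave_on {0..} g" and odd: "\<And>u v. g (- u) (- v) = - g u v"
  shows "schur_convex_on {..0} g"
  unfolding schur_convex_on_def
proof (intro ballI impI)
  fix r s r' s' :: real
  assume "r \<in> {..0}" "s \<in> {..0}" "r' \<in> {..0}" "s' \<in> {..0}" "majorized2 (r, s) (r', s')"
  then have "- g (- r) (- s) \<le> - g (- r') (- s')"
    using conc majorized2_scale[of r s r' s' "- 1"] by (simp add: schur_concave_on_def schur_convex_on_def)
  then show "g r s \<le> g r' s'" by (simp add: odd)
qed

section \<open>The extended mean in exponential coordinates\<close>

lemma sinh_div_pos: "(z :: real) \<noteq> 0 \<Longrightarrow> sinh z / z > 0"
  using sinhc_pos[of z] by (simp add: sinhc_def)

lemma power_difference_exp_form:
  fixes c h t :: real assumes "t \<noteq> 0" "h \<noteq> 0"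
  shows "(exp (c + h) powr t - exp (c - h) powr t) / t = 2 * h * exp (t * c + psi (t * h))"
proof -
  have th: "t * h \<noteq> 0" using assms by simp
  have "exp (c + h) powr t - exp (c - h) powr t = exp (t * c) * (exp (t * h) - exp (- (t * h)))"
    by (simp add: exp_powr_real algebra_simps flip: exp_add)
  also have "\<dots> = 2 * exp (t * c) * sinh (t * h)"
    by (simp add: sinh_field_def)
  finally have "(exp (c + h) powr t - exp (c - h) powr t) / t = 2 * h * (exp (t * c) * (sinh (t * h) / (t * h)))"
    using assms by (simp add: field_simps)
  also have "exp (t * c) * (sinh (t * h) / (t * h)) = exp (t * c + psi (t * h))"
    using sinh_div_pos[OF th] by (simp add: exp_add psi_nonzero[OF th])
  finally show ?thesis .
qed

lemma log_power_mean_exp_form: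
  fixes c h t :: real assumes "t \<noteq> 0" "h \<noteq> 0"
  shows "((1 / t) * ((exp (c + h) powr t - exp (c - h) powr t) / (ln (exp (c + h)) - ln (exp (c - h)))))
      powr (1 / t) = exp (c + psi (t * h) / t)"
proof -
  have "(1 / t) * ((exp (c + h) powr t - exp (c - h) powr t) / (ln (exp (c + h)) - ln (exp (c - h))))
      = (exp (c + h) powr t - exp (c - h) powr t) / t / (2 * h)"
    by simp
  also have "\<dots> = exp (t * c + psi (t * h))"
    using power_difference_exp_form[OF assms, of c] assms by simp
  finally have base: "(1 / t) * ((exp (c + h) powr t - exp (c - h) powr t) /
      (ln (exp (c + h)) - ln (exp (c - h)))) = exp (t * c + psi (t * h))" .
  show ?thesis
    by (subst base) (use assms in \<open>simp add: exp_powr_real field_simps\<close>)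
qed

lemma power_quotient_mean_exp_form:
  fixes c h r s :: real assumes "r \<noteq> 0" "s \<noteq> 0" "r \<noteq> s" "h \<noteq> 0"
  shows "((r / s) * ((exp (c + h) powr s - exp (c - h) powr s) / (exp (c + h) powr r - exp (c - h) powr r)))
      powr (1 / (s - r)) = exp (c + (psi (s * h) - psi (r * h)) / (s - r))"
proof -
  have "(r / s) * ((exp (c + h) powr s - exp (c - h) powr s) / (exp (c + h) powr r - exp (c - h) powr r))
      = ((exp (c + h) powr s - exp (c - h) powr s) / s) / ((exp (c + h) powr r - exp (c - h) powr r) / r)"
    using assms by (simp add: field_simps)
  also have "\<dots> = exp (s * c + psi (s * h)) / exp (r * c + psi (r * h))"
    using assms by (simp add: power_difference_exp_form)
  also have "\<dots> = exp ((s - r) * c + (psi (s * h) - psi (r * h)))"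
    by (simp add: algebra_simps flip: exp_diff)
  finally have base: "(r / s) * ((exp (c + h) powr s - exp (c - h) powr s) /
      (exp (c + h) powr r - exp (c - h) powr r)) = exp ((s - r) * c + (psi (s * h) - psi (r * h)))" .
  show ?thesis
    by (subst base) (use assms in \<open>simp add: exp_powr_real field_simps\<close>)
qed

lemma identric_mean_exp_form:
  fixes c h r :: real assumes "r \<noteq> 0" "h \<noteq> 0"
  defines "x \<equiv> exp (c - h)" and "y \<equiv> exp (c + h)"
  shows "exp (- 1 / r) * ((x powr (x powr r) / y powr (y powr r)) powr (1 / (x powr r - y powr r)))
      = exp (c + h * psi1 (r * h))"
proof -
  define A where "A = x powr r"
  define B where "B = y powr r"
  have rh: "r * h \<noteq> 0" using assms by simp
  have AB: "A = exp (r * c) * exp (- (r * h))" "B = exp (r * c) * exp (r * h)"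
    unfolding A_def B_def x_def y_def by (simp_all add: exp_powr_real algebra_simps flip: exp_add)
  have "B - A = 2 * exp (r * c) * sinh (r * h)" "B + A = 2 * exp (r * c) * cosh (r * h)"
    unfolding AB by (simp_all add: sinh_field_def cosh_field_def algebra_simps)
  moreover have "sinh (r * h) \<noteq> 0" using rh by simp
  ultimately have AB_ratio: "(B + A) / (B - A) = cosh (r * h) / sinh (r * h)" and "A \<noteq> B"
    by auto
  have "x powr A / y powr B = exp ((c - h) * A - (c + h) * B)"
    unfolding x_def y_def exp_powr_real by (simp add: exp_diff)
  then have "(x powr A / y powr B) powr (1 / (A - B)) = exp (c + h * ((B + A) / (B - A)))"
    using \<open>A \<noteq> B\<close> by (simp add: exp_powr_real field_simps)
  then have "(x powr A / y powr B) powr (1 / (A - B)) = exp (c + h * (cosh (r * h) / sinh (r * h)))"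
    by (simp only: AB_ratio)
  moreover have "exp (- 1 / r) * exp (c + h * (cosh (r * h) / sinh (r * h))) = exp (c + h * psi1 (r * h))"
    using rh by (simp add: psi1_def field_simps flip: exp_add)
  ultimately show ?thesis by (simp add: A_def B_def)
qed

lemma ext_mean_exp_form:
  fixes c h r s :: real assumes h: "h \<noteq> 0"
  shows "ext_mean r s (exp (c - h)) (exp (c + h)) = exp (c + h * divdiff psi psi1 (r * h) (s * h))"
proof -
  have xy: "exp (c - h) \<noteq> exp (c + h)" using h by simp
  consider "r \<noteq> 0" "s \<noteq> 0" "r \<noteq> s" | "r \<noteq> 0" "s = 0" | "r = 0" "s \<noteq> 0"
    | "r = s" "r \<noteq> 0" | "r = 0" "s = 0" by blast
  then show ?thesis
  proof cases
    case 1
    then show ?thesis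
      using xy h power_quotient_mean_exp_form[of r s h c]
      by (simp add: ext_mean_def divdiff_def field_simps)
  next
    case 2
    then show ?thesis
      using xy h log_power_mean_exp_form[of r h c]
      by (simp add: ext_mean_def divdiff_def psi_def sinhc_def field_simps)
  next
    case 3
    then show ?thesis
      using xy h log_power_mean_exp_form[of s h c]
      by (simp add: ext_mean_def divdiff_def psi_def sinhc_def field_simps)
  next
    case 4
    then show ?thesis
      using xy h identric_mean_exp_form[of r h c]
      by (simp add: ext_mean_def divdiff_def)
  next
    case 5
    have "exp (c - h) * exp (c + h) = (exp c)\<^sup>2"
      by (simp add: power2_eq_square flip: exp_add)
    then have "sqrt (exp (c - h) * exp (c + h)) = exp c" by simp
    with 5 xy show ?thesis by (simp add: ext_mean_def divdiff_def psi1_def)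
  qed
qed

text \<open>Choosing c and h from x and y, and using that the divided difference of psi is odd
  to make the scale positive.\<close>

lemma ext_mean_exp_form_pos_scale:
  fixes x y :: real assumes "x > 0" "y > 0" "x \<noteq> y"
  obtains k c where "k > 0"
    and "\<And>r s. ext_mean r s x y = exp (c + k * divdiff psi psi1 (r * k) (s * k))"
proof -
  define c where "c = (ln x + ln y) / 2"
  define h where "h = (ln y - ln x) / 2"
  have "h \<noteq> 0" using assms by (simp add: h_def)
  have "c - h = ln x" "c + h = ln y" by (simp_all add: c_def h_def field_simps)
  then have xy: "x = exp (c - h)" "y = exp (c + h)" using assms by simp_all
  have odd: "divdiff psi psi1 (- u) (- v) = - divdiff psi psi1 u v" for u v
    by (rule divdiff_odd[of psi psi1, OF psi_even psi1_odd])
  have "h * divdiff psi psi1 (r * h) (s * h)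
      = \<bar>h\<bar> * divdiff psi psi1 (r * \<bar>h\<bar>) (s * \<bar>h\<bar>)" for r s
    using odd[of "r * \<bar>h\<bar>" "s * \<bar>h\<bar>"] by (cases "h \<ge> 0") auto
  then show ?thesis
    using that[of "\<bar>h\<bar>" c] \<open>h \<noteq> 0\<close> ext_mean_exp_form[OF \<open>h \<noteq> 0\<close>] unfolding xy by simp
qed

section \<open>Schur-concavity and Schur-convexity of the extended mean\<close>

text \<open>The divided difference of psi: Schur-concave on the nonnegative quadrant because psi''
  is nonincreasing there, and Schur-convex on the nonpositive quadrant because it is odd.\<close>

lemma psi_divdiff_schur_concave: "schur_concave_on {0..} (divdiff psi psi1)"
  using divdiff_schur_concave[OF psi_continuous_on_nonneg psi_has_derivative psi1_has_derivative]
    psi2_antitone by blast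

lemma psi_divdiff_schur_convex: "schur_convex_on {..0} (divdiff psi psi1)"
  by (rule schur_convex_on_nonpos_if_odd[OF psi_divdiff_schur_concave
        divdiff_odd[of psi psi1, OF psi_even psi1_odd]])

text \<open>E is exp (c + k D (k r, k s)) with k > 0, an increasing function of a rescaled D.\<close>

theorem theorem2:
  fixes x y :: real
  assumes "x > 0" and "y > 0"
  shows "schur_concave_on {0..} (\<lambda>r s. ext_mean r s x y)
     \<and> schur_convex_on {..0} (\<lambda>r s. ext_mean r s x y)"
proof (cases "x = y")
  case True
  then have "ext_mean r s x y = x" for r s by (simp add: ext_mean_def)
  then show ?thesis by (simp add: schur_concave_on_def schur_convex_on_def)
next
  case False
  obtain k c where "k > 0" and E: "\<And>r s. ext_mean r s x y = exp (c + k * divdiff psi psi1 (r * k) (s * k))"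
    using ext_mean_exp_form_pos_scale[OF assms False] by blast
  have "mono (\<lambda>z. - exp (c - k * z))" "mono (\<lambda>z. exp (c + k * z))"
    using \<open>k > 0\<close> by (auto intro!: monoI simp: mult_left_mono)
  then have "schur_convex_on {0..} (\<lambda>r s. - exp (c - k * - divdiff psi psi1 (r * k) (s * k)))"
    and "schur_convex_on {..0} (\<lambda>r s. exp (c + k * divdiff psi psi1 (r * k) (s * k)))"
    using schur_convex_on_rescale_mono[of "{0..}" "\<lambda>u v. - divdiff psi psi1 u v" k "{0..}"
        "\<lambda>z. - exp (c - k * z)"]
      schur_convex_on_rescale_mono[of "{..0}" "divdiff psi psi1" k "{..0}" "\<lambda>z. exp (c + k * z)"]
      psi_divdiff_schur_concave psi_divdiff_schur_convex \<open>k > 0\<close>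
    by (simp_all add: schur_concave_on_def mult_nonpos_nonneg)
  then show ?thesis unfolding schur_concave_on_def E by simp
qed

end
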